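(* Let $I\subseteq\mathbb{R}$ be an interval, $X\subseteq I$, $q,r\ge0$, and let $f:X\to\mathbb{R}$ be strictly increasing or strictly decreasing. If every bounded gap of $X$ has length less than $q$ and every bounded gap of $f(X)$ has length less than $r$, then $f$ is $r$-continuous on $X$.
   Context: A gap of a set $X\subseteq\mathbb{R}$ is a nonempty interval $J\subseteq\mathbb{R}$ containing no point of $X$ such that no interval strictly containing $J$ has this property; its length is $\sup J-\inf J$. For $D\subseteq\mathbb{R}$, $f:D\to\mathbb{R}$ and $r\ge 0$: $f$ is $r$-continuous at $a\in D$ if for every $\varepsilon>0$ there is $\delta>0$ such that for all $x\in D$ with $|x-a|<\delta$ one has $|f(x)-f(a)|<r+\varepsilon$; $f$ is $r$-continuous on $D$ if it is $r$-continuous at every point of $D$. *)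

theory Defs
  imports "HOL-Analysis.Analysis"
begin

definition gap :: "real set \<Rightarrow> real set \<Rightarrow> bool" where
  "gap X J \<longleftrightarrow> J \<noteq> {} \<and> is_interval J \<and> J \<inter> X = {} \<and>
     (\<forall>J'. is_interval J' \<and> J' \<inter> X = {} \<and> J \<subseteq> J' \<longrightarrow> J' = J)"

definition gap_length :: "real set \<Rightarrow> real" where
  "gap_length J = Sup J - Inf J"

definition r_continuous_at :: "real set \<Rightarrow> (real \<Rightarrow> real) \<Rightarrow> real \<Rightarrow> real \<Rightarrow> bool" where
  "r_continuous_at D f r a \<longleftrightarrow>
     (\<forall>\<epsilon>>0. \<exists>\<delta>>0. \<forall>x\<in>D. \<bar>x - a\<bar> < \<delta> \<longrightarrow> \<bar>f x - f a\<bar> < r + \<epsilon>)"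

definition r_continuous_on :: "real set \<Rightarrow> (real \<Rightarrow> real) \<Rightarrow> real \<Rightarrow> bool" where
  "r_continuous_on D f r \<longleftrightarrow> (\<forall>a\<in>D. r_continuous_at D f r a)"

end

theory Submission
  imports Defs
begin

(* Reduce to a strictly increasing function g: for a decreasing f
   use -f, which does not change the gap lengths of the image.  For increasing g
   and a \<in> X, let L be the infimum of g over the points of X to the right of a.
   The open interval (g a, L) misses g(X) and lies between two points of g(X),
   so it is contained in a bounded gap of g(X); hence L - g a < r, and points of
   X close enough to the right of a are mapped below L + \<epsilon>.  Reflecting
   x \<mapsto> -x handles the left of a. *)

lemma gap_connected_component:
  fixes Y :: "real set"
  assumes "m \<notin> Y"
  shows "gap Y (connected_component_set (- Y) m)"
  unfolding gap_def
proof (intro conjI allI impI)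
  let ?C = "connected_component_set (- Y) m"
  have m: "m \<in> ?C" using assms by (simp add: connected_component_refl_eq)
  then show "?C \<noteq> {}" by blast
  show "is_interval ?C" by (simp add: is_interval_connected_1)
  show "?C \<inter> Y = {}" using connected_component_subset by blast
  fix J assume J: "is_interval J \<and> J \<inter> Y = {} \<and> ?C \<subseteq> J"
  have "J \<subseteq> ?C"
  proof (rule connected_component_maximal)
    show "m \<in> J" using m J by blast
    show "connected J" using J by (simp add: is_interval_connected_1)
    show "J \<subseteq> - Y" using J by blast
  qed
  then show "J = ?C" using J by blast
qed

lemma connected_component_between:
  fixes Y :: "real set"
  assumes "u \<in> Y" "v \<in> Y" "u < m" "m < v"
  shows "connected_component_set (- Y) m \<subseteq> {u..v}"
proof
  let ?C = "connected_component_set (- Y) m"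
  fix t assume t: "t \<in> ?C"
  have "m \<in> - Y"
    using t connected_component_in[of "- Y" m t] by simp
  then have m: "m \<in> ?C" by (simp add: connected_component_refl_eq)
  have ivl: "is_interval ?C" by (simp add: is_interval_connected_1)
  have u: "u \<notin> ?C" and v: "v \<notin> ?C"
    using assms(1,2) connected_component_subset by blast+
  have "\<not> t < u"
  proof
    assume "t < u"
    then have "u \<in> ?C" using ivl t m assms(3) unfolding is_interval_1 by (meson less_imp_le)
    then show False using u by contradiction
  qed
  moreover have "\<not> v < t"
  proof
    assume "v < t"
    then have "v \<in> ?C" using ivl t m assms(4) unfolding is_interval_1 by (meson less_imp_le)
    then show False using v by contradiction
  qed
  ultimately show "t \<in> {u..v}" by simp
qed

definition short_holes :: "real set \<Rightarrow> real \<Rightarrow> bool" where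
  "short_holes Y r \<longleftrightarrow>
     (\<forall>u\<in>Y. \<forall>v\<in>Y. \<forall>c d. u \<le> c \<and> c < d \<and> d \<le> v \<and> {c<..<d} \<inter> Y = {} \<longrightarrow> d - c < r)"

(* A hole is contained in the bounded gap through its midpoint, hence is short. *)
lemma short_holes_if_bounded_gaps_short:
  fixes Y :: "real set"
  assumes gaps: "\<forall>J. gap Y J \<and> bounded J \<longrightarrow> gap_length J < r"
  shows "short_holes Y r"
  unfolding short_holes_def
proof (intro ballI allI impI)
  fix u v c d assume u: "u \<in> Y" and v: "v \<in> Y"
    and hole: "u \<le> c \<and> c < d \<and> d \<le> v \<and> {c<..<d} \<inter> Y = {}"
  define m where "m = (c + d) / 2"
  let ?C = "connected_component_set (- Y) m"
  have m: "c < m" "m < d" using hole by (auto simp: m_def)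
  then have "m \<notin> Y" using hole by fastforce
  have hole_C: "{c<..<d} \<subseteq> ?C"
  proof (rule connected_component_maximal)
    show "m \<in> {c<..<d}" "connected {c<..<d}" using m by simp_all
    show "{c<..<d} \<subseteq> - Y" using hole by blast
  qed
  have C_uv: "?C \<subseteq> {u..v}"
    using connected_component_between[OF u v] m hole by simp
  have "gap_length ?C < r"
    using gaps gap_connected_component[OF \<open>m \<notin> Y\<close>] bounded_subset[OF bounded_closed_interval C_uv]
    by blast
  moreover have "Sup {c<..<d} \<le> Sup ?C"
    using m hole_C bdd_above_mono[OF bdd_above_Icc C_uv] by (intro cSup_subset_mono) auto
  moreover have "Inf ?C \<le> Inf {c<..<d}"
    using m hole_C bdd_below_mono[OF bdd_below_Icc C_uv] by (intro cInf_superset_mono) auto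
  ultimately have "Sup {c<..<d} - Inf {c<..<d} < r" unfolding gap_length_def by linarith
  then show "d - c < r" using hole by simp
qed

lemma short_holes_uminus:
  assumes "short_holes Y r"
  shows "short_holes (uminus ` Y) r"
  unfolding short_holes_def
proof (intro ballI allI impI)
  fix u v c d assume u: "u \<in> uminus ` Y" and v: "v \<in> uminus ` Y"
    and hole: "u \<le> c \<and> c < d \<and> d \<le> v \<and> {c<..<d} \<inter> uminus ` Y = {}"
  have "{-d<..<-c} \<inter> Y = {}"
  proof (rule ccontr)
    assume "{-d<..<-c} \<inter> Y \<noteq> {}"
    then obtain y where "y \<in> Y" "-d < y" "y < -c" by auto
    then have "-y \<in> {c<..<d} \<inter> uminus ` Y" by auto
    then show False using hole by blast
  qed
  moreover have "-v \<in> Y" "-u \<in> Y" using u v by auto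
  ultimately have "(-c) - (-d) < r"
    using assms[unfolded short_holes_def, rule_format, of "-v" "-u" "-d" "-c"] hole by simp
  then show "d - c < r" by simp
qed

(* Right-hand half of r-continuity: the infimum L of g to the right of a is
   within r of g a, since (g a, L) is a hole of g(X). *)
lemma increasing_right_r_continuous:
  fixes X :: "real set" and g :: "real \<Rightarrow> real"
  assumes mono: "strict_mono_on X g" and holes: "short_holes (g ` X) r"
    and a: "a \<in> X" and e: "\<epsilon> > 0" and r: "r \<ge> 0"
  shows "\<exists>\<delta>>0. \<forall>x\<in>X. a < x \<and> x < a + \<delta> \<longrightarrow> g x - g a < r + \<epsilon>"
proof (cases "\<exists>x\<in>X. a < x")
  case False
  then show ?thesis by (intro exI[of _ 1]) auto
next
  case True
  define S where "S = g ` {x\<in>X. a < x}"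
  define L where "L = Inf S"
  have S_ne: "S \<noteq> {}" using True by (auto simp: S_def)
  have S_above: "g a < s" if "s \<in> S" for s
    using that mono a by (auto simp: S_def dest: strict_mono_onD)
  have "bdd_below S" using S_above by (intro bdd_belowI[of _ "g a"]) (simp add: less_imp_le)
  then have L_le: "L \<le> s" if "s \<in> S" for s
    unfolding L_def using that by (rule cInf_lower[rotated])
  have ga_L: "g a \<le> L"
    unfolding L_def using S_ne S_above by (intro cInf_greatest) (auto intro: less_imp_le)
  have hole: "{g a<..<L} \<inter> g ` X = {}"
  proof (rule ccontr)
    assume "{g a<..<L} \<inter> g ` X \<noteq> {}"
    then obtain x where x: "x \<in> X" "g a < g x" "g x < L" by auto
    have "a < x"
    proof (rule ccontr)
      assume "\<not> a < x"
      then have "g x \<le> g a"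
        using strict_mono_onD[OF mono x(1) a] by (cases "x = a") auto
      then show False using x by simp
    qed
    then show False using x L_le[of "g x"] by (auto simp: S_def)
  qed
  have L_r: "L - g a \<le> r"
  proof (cases "L = g a")
    case False
    obtain s where s: "s \<in> S" using S_ne by auto
    then have "s \<in> g ` X" by (auto simp: S_def)
    then have "L - g a < r"
      using holes[unfolded short_holes_def, rule_format, of "g a" s "g a" L] a hole ga_L False L_le[OF s]
      by simp
    then show ?thesis by simp
  qed (use r in simp)
  obtain s where "s \<in> S" "s < L + \<epsilon>"
    using cInf_lessD[OF S_ne, of "L + \<epsilon>"] e unfolding L_def by auto
  then obtain x0 where x0: "x0 \<in> X" "a < x0" "g x0 < L + \<epsilon>" by (auto simp: S_def)
  have "g x - g a < r + \<epsilon>" if "x \<in> X" "x < x0" for x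
    using strict_mono_onD[OF mono that(1) x0(1) that(2)] x0 L_r by linarith
  then show ?thesis using x0 by (intro exI[of _ "x0 - a"]) auto
qed

(* Two-sided version: the left half is the right half for x \<mapsto> -g(-x) on -X. *)
lemma increasing_r_continuous_at:
  fixes X :: "real set" and g :: "real \<Rightarrow> real"
  assumes mono: "strict_mono_on X g" and holes: "short_holes (g ` X) r"
    and a: "a \<in> X" and r: "r \<ge> 0"
  shows "r_continuous_at X g r a"
  unfolding r_continuous_at_def
proof (intro allI impI)
  fix \<epsilon> :: real assume e: "\<epsilon> > 0"
  define g' where "g' = (\<lambda>x. - g (- x))"
  have mono': "strict_mono_on (uminus ` X) g'"
  proof (rule strict_mono_onI)
    fix x y assume "x \<in> uminus ` X" "y \<in> uminus ` X" "x < y"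
    then show "g' x < g' y" using strict_mono_onD[OF mono, of "- y" "- x"] by (auto simp: g'_def)
  qed
  have "g' ` uminus ` X = uminus ` g ` X" by (auto simp: g'_def image_image)
  then have holes': "short_holes (g' ` uminus ` X) r"
    using short_holes_uminus[OF holes] by simp
  obtain d1 where d1: "d1 > 0" "\<forall>x\<in>X. a < x \<and> x < a + d1 \<longrightarrow> g x - g a < r + \<epsilon>"
    using increasing_right_r_continuous[OF mono holes a e r] by blast
  obtain d2 where d2: "d2 > 0"
      "\<forall>x\<in>uminus ` X. -a < x \<and> x < -a + d2 \<longrightarrow> g' x - g' (-a) < r + \<epsilon>"
    using increasing_right_r_continuous[OF mono' holes' _ e r] a by blast
  have "\<bar>g x - g a\<bar> < r + \<epsilon>" if x: "x \<in> X" "\<bar>x - a\<bar> < min d1 d2" for x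
  proof (cases x a rule: linorder_cases)
    case less
    then have "g x < g a" using mono x a by (auto dest: strict_mono_onD)
    moreover have "g' (-x) - g' (-a) < r + \<epsilon>" using d2 x less by auto
    ultimately show ?thesis by (simp add: g'_def)
  next
    case greater
    then have "g a < g x" using mono x a by (auto dest: strict_mono_onD)
    moreover have "g x - g a < r + \<epsilon>" using d1 x greater by auto
    ultimately show ?thesis by simp
  qed (use r e in simp)
  then show "\<exists>\<delta>>0. \<forall>x\<in>X. \<bar>x - a\<bar> < \<delta> \<longrightarrow> \<bar>g x - g a\<bar> < r + \<epsilon>"
    using d1 d2 by (intro exI[of _ "min d1 d2"]) auto
qed

theorem theorem8:
  fixes I X :: "real set" and q r :: real and f :: "real \<Rightarrow> real"
  assumes "is_interval I" and "X \<subseteq> I" and "q \<ge> 0" and "r \<ge> 0"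
    and "(\<forall>x\<in>X. \<forall>y\<in>X. x < y \<longrightarrow> f x < f y) \<or> (\<forall>x\<in>X. \<forall>y\<in>X. x < y \<longrightarrow> f x > f y)"
    and "\<forall>J. gap X J \<and> bounded J \<longrightarrow> gap_length J < q"
    and "\<forall>J. gap (f ` X) J \<and> bounded J \<longrightarrow> gap_length J < r"
  shows "r_continuous_on X f r"
  unfolding r_continuous_on_def
proof
  fix a assume a: "a \<in> X"
  have holes: "short_holes (f ` X) r"
    using short_holes_if_bounded_gaps_short assms(7) by blast
  from assms(5) show "r_continuous_at X f r a"
  proof
    assume "\<forall>x\<in>X. \<forall>y\<in>X. x < y \<longrightarrow> f x < f y"
    then have "strict_mono_on X f" by (auto intro: strict_mono_onI)
    then show ?thesis using increasing_r_continuous_at holes a assms(4) by blast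
  next
    assume "\<forall>x\<in>X. \<forall>y\<in>X. x < y \<longrightarrow> f x > f y"
    then have "strict_mono_on X (\<lambda>x. - f x)" by (auto intro: strict_mono_onI)
    moreover have "short_holes ((\<lambda>x. - f x) ` X) r"
      using short_holes_uminus[OF holes] by (simp add: image_image)
    ultimately have "r_continuous_at X (\<lambda>x. - f x) r a"
      using increasing_r_continuous_at a assms(4) by blast
    then show ?thesis by (simp add: r_continuous_at_def abs_minus_commute)
  qed
qed

end
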